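(* Let $\mathbb P^{(1)}$ and $\mathbb P^{(2)}$ be laws of IID sequences $\{\omega_n\}_{n\ge1}$ of bounded, symmetric (hence centered) random variables with $\mathbb E[\omega_1^2]=1$. Then there is a constant $c>0$ such that for every $h\ge0$, $0\le\lambda\le1$, $N\in2\mathbb N$, $m\in\{0,2,\dots,N\}$ and $a\in\{\mathtt f,\mathtt c\}$, $$\big|\mathbb E^{(1)}\textsc{f}^a_{N,\omega}(\lambda,h;m)-\mathbb E^{(2)}\textsc{f}^a_{N,\omega}(\lambda,h;m)\big|\le c\,\frac{m\lambda^3}{N}$$ and $$\big|\mathbb E^{(1)}\textsc{f}^a_{N,\omega}(\lambda,h)-\mathbb E^{(2)}\textsc{f}^a_{N,\omega}(\lambda,h)\big|\le c\,\lambda^3.$$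
   Context: $S=\{S_n\}_{n\ge0}$ is the simple symmetric random walk on $\mathbb Z$ started at $0$, law $\mathbf P$, expectation $\mathbf E$. Set $\mathrm{sign}(S_{2n}):=\mathrm{sign}(S_{2n-1})$ whenever $S_{2n}=0$, $\Delta_n=(1-\mathrm{sign}(S_n))/2$, $\mathcal N=\sum_{n=1}^N\Delta_n$. Let $\Omega^{\mathtt f}_N$ be the set of all paths and $\Omega^{\mathtt c}_N=\{S_N=0\}$. For a set of paths $\tilde\Omega$, $Z_{N,\omega}(\tilde\Omega)=\mathbf E\big[\exp\big(-2\lambda\sum_{n=1}^N(\omega_n+h)\Delta_n\big);\tilde\Omega\big]$. Define $\textsc{f}^a_{N,\omega}(\lambda,h)=\frac1N\log Z_{N,\omega}(\Omega^a_N)$ and $\textsc{f}^a_{N,\omega}(\lambda,h;m)=\frac1N\log Z_{N,\omega}(\Omega^a_N\cap\{\mathcal N=m\})$. $\mathbb E^{(\ell)}$ denotes expectation with respect to $\mathbb P^{(\ell)}$. *)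

theory Defs
  imports "HOL-Probability.Probability"
begin

text \<open>Paths of the simple random walk of length N are encoded by their increments
  x 0, ..., x (N-1) in {-1,1}; the walk is S_n = x 0 + ... + x (n-1). The uniform
  measure on these 2^N increment vectors is the law P of (S_0,...,S_N).\<close>

definition walk_paths :: "nat \<Rightarrow> (nat \<Rightarrow> int) set" where
  "walk_paths N = ({..<N} \<rightarrow>\<^sub>E {-1, 1})"

definition walk :: "(nat \<Rightarrow> int) \<Rightarrow> nat \<Rightarrow> int" where
  "walk x n = (\<Sum>k<n. x k)"

definition walk_sign :: "(nat \<Rightarrow> int) \<Rightarrow> nat \<Rightarrow> int" where
  "walk_sign x n = (if walk x n = 0 then sgn (walk x (n - 1)) else sgn (walk x n))"

definition Delta :: "(nat \<Rightarrow> int) \<Rightarrow> nat \<Rightarrow> real" where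
  "Delta x n = (1 - real_of_int (walk_sign x n)) / 2"

definition calN :: "(nat \<Rightarrow> int) \<Rightarrow> nat \<Rightarrow> real" where
  "calN x N = (\<Sum>n=1..N. Delta x n)"

datatype bc = Free | Constrained

definition Omega :: "bc \<Rightarrow> nat \<Rightarrow> (nat \<Rightarrow> int) \<Rightarrow> bool" where
  "Omega a N x = (case a of Free \<Rightarrow> True | Constrained \<Rightarrow> walk x N = 0)"

definition Zpart :: "nat \<Rightarrow> real \<Rightarrow> real \<Rightarrow> (nat \<Rightarrow> real) \<Rightarrow> ((nat \<Rightarrow> int) \<Rightarrow> bool) \<Rightarrow> real" where
  "Zpart N lam h \<omega> A = (\<Sum>x\<in>{x\<in>walk_paths N. A x}.
       exp (-2 * lam * (\<Sum>n=1..N. (\<omega> n + h) * Delta x n))) / 2 ^ N"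

definition free_energy :: "bc \<Rightarrow> nat \<Rightarrow> (nat \<Rightarrow> real) \<Rightarrow> real \<Rightarrow> real \<Rightarrow> real" where
  "free_energy a N \<omega> lam h = ln (Zpart N lam h \<omega> (Omega a N)) / real N"

definition free_energy_m :: "bc \<Rightarrow> nat \<Rightarrow> (nat \<Rightarrow> real) \<Rightarrow> real \<Rightarrow> real \<Rightarrow> nat \<Rightarrow> real" where
  "free_energy_m a N \<omega> lam h m =
     ln (Zpart N lam h \<omega> (\<lambda>x. Omega a N x \<and> calN x N = real m)) / real N"

definition iid_law :: "real measure \<Rightarrow> (nat \<Rightarrow> real) measure" where
  "iid_law \<mu> = (\<Pi>\<^sub>M n\<in>UNIV. \<mu>)"

definition good_law :: "real measure \<Rightarrow> bool" where
  "good_law \<mu> \<longleftrightarrow> prob_space \<mu> \<and> sets \<mu> = sets borel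
     \<and> (\<exists>C. AE x in \<mu>. \<bar>x\<bar> \<le> C)
     \<and> distr \<mu> borel uminus = \<mu>
     \<and> (\<integral>x. x\<^sup>2 \<partial>\<mu>) = 1"

end

theory Submission
  imports Defs
begin

text \<open>Interpolate between the two disorder laws: integrate every site of the free energy against
  the mixture \<open>t \<mu>1 + (1 - t) \<mu>2\<close>. The derivative in \<open>t\<close> is the sum over the sites \<open>i\<close> of the
  difference between integrating site \<open>i\<close> against \<open>\<mu>1\<close> and against \<open>\<mu>2\<close>. As a function of the
  disorder \<open>s\<close> at site \<open>i\<close> alone, \<open>N\<close> times the free energy is \<open>ln (P + Q e\<^sup>-\<^sup>2\<^sup>\<lambda>\<^sup>s)\<close> up to a shift
  of \<open>s\<close>, where \<open>Q / (P + Q)\<close> is the Gibbs probability that the walk is negative at time \<open>i\<close>.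
  Both laws have mean \<open>0\<close> and variance \<open>1\<close>, so after a second order Taylor expansion in \<open>s\<close> only
  the cubic remainder survives, of order \<open>\<lambda>\<^sup>3 Q / (P + Q)\<close>. Summing over \<open>i\<close> gives \<open>\<lambda>\<^sup>3\<close> times the
  Gibbs mean of \<open>calN\<close>, divided by \<open>N\<close>; that mean is \<open>m\<close> under the constraint \<open>calN = m\<close>
  and at most \<open>N\<close> in general.\<close>

section \<open>Integrating out single coordinates\<close>

definition seq_borel :: "(nat \<Rightarrow> real) measure" where
  "seq_borel = (\<Pi>\<^sub>M n\<in>UNIV. borel)"

definition bounded_functional :: "((nat \<Rightarrow> real) \<Rightarrow> real) \<Rightarrow> bool" where
  "bounded_functional F \<longleftrightarrow> F \<in> borel_measurable seq_borel \<and> (\<exists>B. \<forall>w. \<bar>F w\<bar> \<le> B)"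

definition integrate_at :: "real measure \<Rightarrow> nat \<Rightarrow> ((nat \<Rightarrow> real) \<Rightarrow> real) \<Rightarrow> (nat \<Rightarrow> real) \<Rightarrow> real"
  where "integrate_at M j F w = (\<integral>s. F (w(j := s)) \<partial>M)"

lemma space_seq_borel [simp]: "space seq_borel = UNIV"
  by (simp add: seq_borel_def space_PiM)

lemma measurable_fun_upd_seq_borel:
  assumes "sets M = sets borel"
  shows "(\<lambda>p. (fst p)(j := snd p)) \<in> measurable (seq_borel \<Otimes>\<^sub>M M) seq_borel"
proof -
  have "(\<lambda>p. (fst p)(j := snd p)) \<in> measurable (seq_borel \<Otimes>\<^sub>M borel) seq_borel"
    unfolding seq_borel_def
  proof (rule measurable_PiM_single')
    fix i
    show "(\<lambda>p. ((fst p)(j := snd p)) i) \<in> borel_measurable ((\<Pi>\<^sub>M n\<in>UNIV. borel) \<Otimes>\<^sub>M borel)"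
    proof (cases "i = j")
      case False
      have "(\<lambda>p. (fst p :: nat \<Rightarrow> real) i) \<in> borel_measurable ((\<Pi>\<^sub>M n\<in>UNIV. borel) \<Otimes>\<^sub>M borel)"
        by measurable
      with False show ?thesis by simp
    qed simp
  qed (simp add: space_PiM)
  moreover have "sets (seq_borel \<Otimes>\<^sub>M M) = sets (seq_borel \<Otimes>\<^sub>M borel)"
    using assms by (intro sets_pair_measure_cong) auto
  ultimately show ?thesis
    using measurable_cong_sets by blast
qed

lemma measurable_fun_upd_seq_borel1:
  assumes "sets M = sets borel"
  shows "(\<lambda>s. w(j := s)) \<in> measurable M seq_borel"
  using measurable_compose[OF measurable_Pair1'[of w seq_borel M] measurable_fun_upd_seq_borel[OF assms]]
  by simp

lemma measurable_id_PiM_seq_borel: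
  assumes "sets M = sets borel"
  shows "(\<lambda>w. w) \<in> measurable (\<Pi>\<^sub>M i\<in>I. M) seq_borel"
  unfolding seq_borel_def
proof (rule measurable_PiM_single')
  fix i
  show "(\<lambda>w. w i) \<in> borel_measurable (\<Pi>\<^sub>M i\<in>I. M)"
  proof (cases "i \<in> I")
    case True
    then have "(\<lambda>w. w i) \<in> measurable (\<Pi>\<^sub>M i\<in>I. M) M"
      by simp
    then show ?thesis
      using measurable_cong_sets[OF refl assms] by blast
  next
    case False
    have "(\<lambda>w. undefined) \<in> borel_measurable (\<Pi>\<^sub>M i\<in>I. M)"
      by simp
    then show ?thesis
      by (rule measurable_cong[THEN iffD1, rotated])
         (use False in \<open>auto simp: space_PiM PiE_def extensional_def\<close>)
  qed
qed (simp add: space_PiM)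

lemma bounded_functional_const: "bounded_functional (\<lambda>_. c)"
  unfolding bounded_functional_def by auto

lemma bounded_functional_abs: "bounded_functional F \<Longrightarrow> bounded_functional (\<lambda>w. \<bar>F w\<bar>)"
  unfolding bounded_functional_def by auto

lemma bounded_functional_lincomb:
  assumes "bounded_functional F" "bounded_functional G"
  shows "bounded_functional (\<lambda>w. a * F w + b * G w)"
proof -
  obtain B1 B2 where B1: "\<And>w. \<bar>F w\<bar> \<le> B1" and B2: "\<And>w. \<bar>G w\<bar> \<le> B2"
    and "F \<in> borel_measurable seq_borel" "G \<in> borel_measurable seq_borel"
    using assms unfolding bounded_functional_def by blast
  moreover have "\<bar>a * F w + b * G w\<bar> \<le> \<bar>a\<bar> * B1 + \<bar>b\<bar> * B2" for w
    using abs_triangle_ineq[of "a * F w" "b * G w"]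
      mult_left_mono[OF B1[of w], of "\<bar>a\<bar>"] mult_left_mono[OF B2[of w], of "\<bar>b\<bar>"]
    by (simp add: abs_mult)
  ultimately show ?thesis
    unfolding bounded_functional_def by auto
qed

lemma bounded_functional_sum:
  "finite S \<Longrightarrow> (\<And>i. i \<in> S \<Longrightarrow> bounded_functional (f i)) \<Longrightarrow>
    bounded_functional (\<lambda>w. \<Sum>i\<in>S. f i w)"
proof (induction S rule: finite_induct)
  case empty
  then show ?case by (simp add: bounded_functional_const)
next
  case (insert x S)
  then have "bounded_functional (\<lambda>w. 1 * f x w + 1 * (\<Sum>i\<in>S. f i w))"
    by (intro bounded_functional_lincomb) auto
  with insert show ?case by simp
qed

context
  fixes M :: "real measure"
  assumes prob_M: "prob_space M" and sets_M: "sets M = sets borel"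
begin

interpretation prob_space M by (fact prob_M)

lemma integrable_fun_upd:
  assumes "bounded_functional F"
  shows "integrable M (\<lambda>s. F (w(j := s)))"
proof -
  obtain B where "\<And>w. \<bar>F w\<bar> \<le> B" "F \<in> borel_measurable seq_borel"
    using assms unfolding bounded_functional_def by blast
  then show ?thesis
    by (intro integrable_const_bound[where B = B])
       (auto intro: measurable_compose[OF measurable_fun_upd_seq_borel1[OF sets_M]])
qed

lemma bounded_functional_integrate_at:
  assumes "bounded_functional F"
  shows "bounded_functional (integrate_at M j F)"
proof -
  obtain B where B: "\<And>w. \<bar>F w\<bar> \<le> B" and F: "F \<in> borel_measurable seq_borel"
    using assms unfolding bounded_functional_def by blast
  have "(\<lambda>p. F ((fst p)(j := snd p))) \<in> borel_measurable (seq_borel \<Otimes>\<^sub>M M)"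
    using measurable_compose[OF measurable_fun_upd_seq_borel[OF sets_M] F] .
  then have "integrate_at M j F \<in> borel_measurable seq_borel"
    unfolding integrate_at_def
    by (intro borel_measurable_lebesgue_integral) (simp add: case_prod_beta)
  moreover have "\<bar>integrate_at M j F w\<bar> \<le> B" for w
  proof -
    have "\<bar>integrate_at M j F w\<bar> \<le> (\<integral>s. \<bar>F (w(j := s))\<bar> \<partial>M)"
      unfolding integrate_at_def using integral_norm_bound[of M "\<lambda>s. F (w(j := s))"] by simp
    also have "\<dots> \<le> B"
      using B by (intro integral_le_const integrable_abs integrable_fun_upd assms) auto
    finally show ?thesis .
  qed
  ultimately show ?thesis
    unfolding bounded_functional_def by blast
qed

lemma integrate_at_lincomb:
  assumes "bounded_functional F" "bounded_functional G"
  shows "integrate_at M j (\<lambda>w. a * F w + b * G w) = (\<lambda>w. a * integrate_at M j F w + b * integrate_at M j G w)"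
  using integrable_fun_upd[OF assms(1)] integrable_fun_upd[OF assms(2)]
  by (simp add: integrate_at_def fun_eq_iff)

lemma integrate_at_mono:
  assumes "bounded_functional F" "bounded_functional G" "\<And>w. F w \<le> G w"
  shows "integrate_at M j F w \<le> integrate_at M j G w"
  unfolding integrate_at_def using assms by (intro integral_mono integrable_fun_upd)

lemma integrate_at_const: "integrate_at M j (\<lambda>_. c) = (\<lambda>_. c)"
  by (simp add: integrate_at_def fun_eq_iff prob_space)

lemma integrate_at_independent:
  assumes "\<And>w s. F (w(j := s)) = F w"
  shows "integrate_at M j F = F"
  using assms by (simp add: integrate_at_def fun_eq_iff prob_space)

lemma integrate_at_commute:
  assumes prob_M': "prob_space M'" and sets_M': "sets M' = sets borel"
    and F: "bounded_functional F" and "i \<noteq> j"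
  shows "integrate_at M j (integrate_at M' i F) = integrate_at M' i (integrate_at M j F)"
proof
  fix w
  interpret pair_sigma_finite M M'
    using prob_M prob_M' by (simp add: pair_sigma_finite_def prob_space_imp_sigma_finite)
  interpret P: prob_space "M \<Otimes>\<^sub>M M'"
    using prob_M prob_M' by (simp add: prob_space_pair)
  obtain B where B: "\<And>w. \<bar>F w\<bar> \<le> B" and F_meas: "F \<in> borel_measurable seq_borel"
    using F unfolding bounded_functional_def by blast
  have "(\<lambda>p. (w(j := fst p), snd p)) \<in> measurable (M \<Otimes>\<^sub>M M') (seq_borel \<Otimes>\<^sub>M M')"
    by (intro measurable_Pair measurable_compose[OF measurable_fst measurable_fun_upd_seq_borel1[OF sets_M]]
        measurable_snd)
  from measurable_compose[OF this measurable_fun_upd_seq_borel[OF sets_M', of i]]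
  have "(\<lambda>p. (w(j := fst p))(i := snd p)) \<in> measurable (M \<Otimes>\<^sub>M M') seq_borel"
    by simp
  then have "integrable (M \<Otimes>\<^sub>M M') (\<lambda>(s, u). F ((w(j := s))(i := u)))"
    using B F_meas by (intro P.integrable_const_bound[where B = B]) (auto simp: case_prod_beta)
  then have "(\<integral>u. (\<integral>s. F ((w(j := s))(i := u)) \<partial>M) \<partial>M') = (\<integral>s. (\<integral>u. F ((w(j := s))(i := u)) \<partial>M') \<partial>M)"
    by (rule Fubini_integral)
  then show "integrate_at M j (integrate_at M' i F) w = integrate_at M' i (integrate_at M j F) w"
    using \<open>i \<noteq> j\<close> by (simp add: integrate_at_def fun_upd_twist)
qed

end

text \<open>The base point \<open>\<lambda>_. undefined\<close> is the value outside \<open>set js\<close> of every point of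
  \<open>\<Pi>\<^sub>M i\<in>set js. M\<close>, so the iterated integral is the product integral for every \<open>F\<close>.\<close>

fun iterated_integral :: "real measure \<Rightarrow> nat list \<Rightarrow> ((nat \<Rightarrow> real) \<Rightarrow> real) \<Rightarrow> real" where
  "iterated_integral M [] F = F (\<lambda>_. undefined)"
| "iterated_integral M (j # js) F = iterated_integral M js (integrate_at M j F)"

lemma iterated_integral_eq_PiM:
  assumes prob_M: "prob_space M" and sets_M: "sets M = sets borel"
  shows "distinct js \<Longrightarrow> bounded_functional F \<Longrightarrow>
    iterated_integral M js F = (\<integral>w. F w \<partial>(\<Pi>\<^sub>M i\<in>set js. M))"
proof (induction js arbitrary: F)
  case Nil
  then show ?case by (simp add: PiM_empty lebesgue_integral_count_space_finite)
next
  case (Cons j js)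
  interpret product_sigma_finite "\<lambda>_. M"
    using prob_M by (simp add: product_sigma_finite_def prob_space_imp_sigma_finite)
  interpret P: prob_space "\<Pi>\<^sub>M i\<in>insert j (set js). M"
    using prob_M by (intro prob_space_PiM) auto
  obtain B where "\<And>w. \<bar>F w\<bar> \<le> B" "F \<in> borel_measurable seq_borel"
    using Cons.prems(2) unfolding bounded_functional_def by blast
  then have "integrable (\<Pi>\<^sub>M i\<in>insert j (set js). M) F"
    by (intro P.integrable_const_bound[where B = B])
       (auto intro: measurable_compose[OF measurable_id_PiM_seq_borel[OF sets_M]])
  then have "(\<integral>w. integrate_at M j F w \<partial>(\<Pi>\<^sub>M i\<in>set js. M)) = (\<integral>w. F w \<partial>(\<Pi>\<^sub>M i\<in>insert j (set js). M))"
    using Cons.prems unfolding integrate_at_def by (subst product_integral_insert) auto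
  then show ?case
    using Cons bounded_functional_integrate_at[OF prob_M sets_M] by simp
qed

section \<open>Interpolation between two one-site laws\<close>

definition integrate_at_mix ::
    "real measure \<Rightarrow> real measure \<Rightarrow> real \<Rightarrow> nat \<Rightarrow> ((nat \<Rightarrow> real) \<Rightarrow> real) \<Rightarrow> (nat \<Rightarrow> real) \<Rightarrow> real"
  where "integrate_at_mix M1 M2 t j F w = t * integrate_at M1 j F w + (1 - t) * integrate_at M2 j F w"

definition integrate_at_diff ::
    "real measure \<Rightarrow> real measure \<Rightarrow> nat \<Rightarrow> ((nat \<Rightarrow> real) \<Rightarrow> real) \<Rightarrow> (nat \<Rightarrow> real) \<Rightarrow> real"
  where "integrate_at_diff M1 M2 j F w = integrate_at M1 j F w - integrate_at M2 j F w"

fun interpolation ::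
    "real measure \<Rightarrow> real measure \<Rightarrow> nat list \<Rightarrow> real \<Rightarrow> ((nat \<Rightarrow> real) \<Rightarrow> real) \<Rightarrow> real"
  where
    "interpolation M1 M2 [] t F = F (\<lambda>_. undefined)"
  | "interpolation M1 M2 (j # js) t F = interpolation M1 M2 js t (integrate_at_mix M1 M2 t j F)"

locale two_laws = M1: prob_space \<mu>1 + M2: prob_space \<mu>2 for \<mu>1 \<mu>2 :: "real measure" +
  assumes sets_\<mu>1: "sets \<mu>1 = sets borel" and sets_\<mu>2: "sets \<mu>2 = sets borel"
begin

lemmas bounded_functional_integrate_at1 =
  bounded_functional_integrate_at[OF M1.prob_space_axioms sets_\<mu>1]
lemmas bounded_functional_integrate_at2 =
  bounded_functional_integrate_at[OF M2.prob_space_axioms sets_\<mu>2]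

lemma bounded_functional_integrate_at_mix:
  "bounded_functional F \<Longrightarrow> bounded_functional (integrate_at_mix \<mu>1 \<mu>2 t j F)"
  unfolding integrate_at_mix_def[abs_def]
  by (intro bounded_functional_lincomb bounded_functional_integrate_at1 bounded_functional_integrate_at2)

lemma bounded_functional_integrate_at_diff:
  assumes "bounded_functional F"
  shows "bounded_functional (integrate_at_diff \<mu>1 \<mu>2 j F)"
proof -
  have "bounded_functional (\<lambda>w. 1 * integrate_at \<mu>1 j F w + (-1) * integrate_at \<mu>2 j F w)"
    using assms
    by (intro bounded_functional_lincomb bounded_functional_integrate_at1 bounded_functional_integrate_at2)
  then show ?thesis
    by (simp add: integrate_at_diff_def[abs_def])
qed

lemma integrate_at_mix_lincomb:
  assumes "bounded_functional F" "bounded_functional G"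
  shows "integrate_at_mix \<mu>1 \<mu>2 t j (\<lambda>w. a * F w + b * G w)
    = (\<lambda>w. a * integrate_at_mix \<mu>1 \<mu>2 t j F w + b * integrate_at_mix \<mu>1 \<mu>2 t j G w)"
  using integrate_at_lincomb[OF M1.prob_space_axioms sets_\<mu>1 assms]
    integrate_at_lincomb[OF M2.prob_space_axioms sets_\<mu>2 assms]
  by (simp add: integrate_at_mix_def fun_eq_iff algebra_simps)

lemma interpolation_lincomb:
  "bounded_functional F \<Longrightarrow> bounded_functional G \<Longrightarrow>
    interpolation \<mu>1 \<mu>2 js t (\<lambda>w. a * F w + b * G w)
      = a * interpolation \<mu>1 \<mu>2 js t F + b * interpolation \<mu>1 \<mu>2 js t G"
  by (induction js arbitrary: F G)
     (simp_all add: integrate_at_mix_lincomb bounded_functional_integrate_at_mix)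

lemma interpolation_const: "interpolation \<mu>1 \<mu>2 js t (\<lambda>_. c) = c"
proof (induction js)
  case (Cons j js)
  have "integrate_at_mix \<mu>1 \<mu>2 t j (\<lambda>_. c) = (\<lambda>_. c)"
    by (simp add: fun_eq_iff integrate_at_mix_def algebra_simps
        integrate_at_const[OF M1.prob_space_axioms sets_\<mu>1] integrate_at_const[OF M2.prob_space_axioms sets_\<mu>2])
  with Cons show ?case by simp
qed simp

lemma interpolation_mono:
  "0 \<le> t \<Longrightarrow> t \<le> 1 \<Longrightarrow> bounded_functional F \<Longrightarrow> bounded_functional G \<Longrightarrow> (\<And>w. F w \<le> G w) \<Longrightarrow>
    interpolation \<mu>1 \<mu>2 js t F \<le> interpolation \<mu>1 \<mu>2 js t G"
proof (induction js arbitrary: F G)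
  case (Cons j js)
  have "integrate_at_mix \<mu>1 \<mu>2 t j F w \<le> integrate_at_mix \<mu>1 \<mu>2 t j G w" for w
    unfolding integrate_at_mix_def using Cons.prems
    by (intro add_mono mult_left_mono integrate_at_mono[OF M1.prob_space_axioms sets_\<mu>1]
        integrate_at_mono[OF M2.prob_space_axioms sets_\<mu>2]) auto
  with Cons show ?case
    by (simp add: bounded_functional_integrate_at_mix)
qed simp

lemma interpolation_sum:
  "finite S \<Longrightarrow> (\<And>i. i \<in> S \<Longrightarrow> bounded_functional (f i)) \<Longrightarrow>
    interpolation \<mu>1 \<mu>2 js t (\<lambda>w. \<Sum>i\<in>S. f i w) = (\<Sum>i\<in>S. interpolation \<mu>1 \<mu>2 js t (f i))"
proof (induction S rule: finite_induct)
  case empty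
  then show ?case by (simp add: interpolation_const)
next
  case (insert x S)
  then have "interpolation \<mu>1 \<mu>2 js t (\<lambda>w. 1 * f x w + 1 * (\<Sum>i\<in>S. f i w))
      = 1 * interpolation \<mu>1 \<mu>2 js t (f x) + 1 * interpolation \<mu>1 \<mu>2 js t (\<lambda>w. \<Sum>i\<in>S. f i w)"
    by (intro interpolation_lincomb bounded_functional_sum) auto
  with insert show ?case by simp
qed

lemma abs_interpolation_le:
  assumes "0 \<le> t" "t \<le> 1" "bounded_functional F"
  shows "\<bar>interpolation \<mu>1 \<mu>2 js t F\<bar> \<le> interpolation \<mu>1 \<mu>2 js t (\<lambda>w. \<bar>F w\<bar>)"
proof -
  have "interpolation \<mu>1 \<mu>2 js t (\<lambda>w. (-1) * F w + 0 * F w) = - interpolation \<mu>1 \<mu>2 js t F"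
    using assms by (subst interpolation_lincomb) auto
  moreover have "interpolation \<mu>1 \<mu>2 js t (\<lambda>w. (-1) * F w + 0 * F w) \<le> interpolation \<mu>1 \<mu>2 js t (\<lambda>w. \<bar>F w\<bar>)"
    using assms by (intro interpolation_mono bounded_functional_abs bounded_functional_lincomb) auto
  moreover have "interpolation \<mu>1 \<mu>2 js t F \<le> interpolation \<mu>1 \<mu>2 js t (\<lambda>w. \<bar>F w\<bar>)"
    using assms by (intro interpolation_mono bounded_functional_abs) auto
  ultimately show ?thesis by linarith
qed

lemma interpolation_1: "interpolation \<mu>1 \<mu>2 js 1 F = iterated_integral \<mu>1 js F"
  by (induction js arbitrary: F) (simp_all add: integrate_at_mix_def[abs_def])

lemma interpolation_0: "interpolation \<mu>1 \<mu>2 js 0 F = iterated_integral \<mu>2 js F"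
  by (induction js arbitrary: F) (simp_all add: integrate_at_mix_def[abs_def])

lemma interpolation_Cons_split:
  assumes "bounded_functional F"
  shows "interpolation \<mu>1 \<mu>2 (j # js) t F
    = t * interpolation \<mu>1 \<mu>2 js t (integrate_at \<mu>1 j F) + (1 - t) * interpolation \<mu>1 \<mu>2 js t (integrate_at \<mu>2 j F)"
  using assms
  by (simp add: integrate_at_mix_def[abs_def] interpolation_lincomb
      bounded_functional_integrate_at1 bounded_functional_integrate_at2)

lemma interpolation_Cons_diff_same:
  assumes "bounded_functional F"
  shows "interpolation \<mu>1 \<mu>2 (j # js) t (integrate_at_diff \<mu>1 \<mu>2 j F)
    = interpolation \<mu>1 \<mu>2 js t (integrate_at \<mu>1 j F) - interpolation \<mu>1 \<mu>2 js t (integrate_at \<mu>2 j F)"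
proof -
  have "integrate_at_diff \<mu>1 \<mu>2 j F (w(j := s)) = integrate_at_diff \<mu>1 \<mu>2 j F w" for w s
    by (simp add: integrate_at_diff_def integrate_at_def)
  then have "integrate_at \<mu>1 j (integrate_at_diff \<mu>1 \<mu>2 j F) = integrate_at_diff \<mu>1 \<mu>2 j F"
    and "integrate_at \<mu>2 j (integrate_at_diff \<mu>1 \<mu>2 j F) = integrate_at_diff \<mu>1 \<mu>2 j F"
    by (simp_all add: integrate_at_independent[OF M1.prob_space_axioms sets_\<mu>1]
        integrate_at_independent[OF M2.prob_space_axioms sets_\<mu>2])
  then have "integrate_at_mix \<mu>1 \<mu>2 t j (integrate_at_diff \<mu>1 \<mu>2 j F) = integrate_at_diff \<mu>1 \<mu>2 j F"
    by (simp add: fun_eq_iff integrate_at_mix_def algebra_simps)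
  also have "\<dots> = (\<lambda>w. 1 * integrate_at \<mu>1 j F w + (-1) * integrate_at \<mu>2 j F w)"
    by (simp add: fun_eq_iff integrate_at_diff_def)
  finally have mix: "integrate_at_mix \<mu>1 \<mu>2 t j (integrate_at_diff \<mu>1 \<mu>2 j F)
      = (\<lambda>w. 1 * integrate_at \<mu>1 j F w + (-1) * integrate_at \<mu>2 j F w)" .
  have "interpolation \<mu>1 \<mu>2 js t (\<lambda>w. 1 * integrate_at \<mu>1 j F w + (-1) * integrate_at \<mu>2 j F w)
      = 1 * interpolation \<mu>1 \<mu>2 js t (integrate_at \<mu>1 j F) + (-1) * interpolation \<mu>1 \<mu>2 js t (integrate_at \<mu>2 j F)"
    using assms by (intro interpolation_lincomb bounded_functional_integrate_at1 bounded_functional_integrate_at2)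
  with mix show ?thesis
    by simp
qed

lemma integrate_at_integrate_at_diff:
  assumes "prob_space M" "sets M = sets borel" "bounded_functional F" "i \<noteq> j"
  shows "integrate_at M j (integrate_at_diff \<mu>1 \<mu>2 i F) = integrate_at_diff \<mu>1 \<mu>2 i (integrate_at M j F)"
proof -
  have "integrate_at_diff \<mu>1 \<mu>2 i F = (\<lambda>w. 1 * integrate_at \<mu>1 i F w + (-1) * integrate_at \<mu>2 i F w)"
    by (simp add: integrate_at_diff_def[abs_def])
  then have "integrate_at M j (integrate_at_diff \<mu>1 \<mu>2 i F)
      = (\<lambda>w. 1 * integrate_at M j (integrate_at \<mu>1 i F) w + (-1) * integrate_at M j (integrate_at \<mu>2 i F) w)"
    using assms by (simp only: integrate_at_lincomb bounded_functional_integrate_at1 bounded_functional_integrate_at2)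
  also have "\<dots> = integrate_at_diff \<mu>1 \<mu>2 i (integrate_at M j F)"
    using assms
    by (simp add: fun_eq_iff integrate_at_diff_def integrate_at_commute[OF _ _ M1.prob_space_axioms sets_\<mu>1]
        integrate_at_commute[OF _ _ M2.prob_space_axioms sets_\<mu>2])
  finally show ?thesis .
qed

lemma interpolation_Cons_diff_other:
  assumes "bounded_functional F" "i \<noteq> j"
  shows "interpolation \<mu>1 \<mu>2 (j # js) t (integrate_at_diff \<mu>1 \<mu>2 i F)
    = t * interpolation \<mu>1 \<mu>2 js t (integrate_at_diff \<mu>1 \<mu>2 i (integrate_at \<mu>1 j F))
      + (1 - t) * interpolation \<mu>1 \<mu>2 js t (integrate_at_diff \<mu>1 \<mu>2 i (integrate_at \<mu>2 j F))"
  unfolding interpolation_Cons_split[OF bounded_functional_integrate_at_diff[OF assms(1)]]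
  using assms
  by (simp add: integrate_at_integrate_at_diff[OF M1.prob_space_axioms sets_\<mu>1]
      integrate_at_integrate_at_diff[OF M2.prob_space_axioms sets_\<mu>2])

lemma interpolation_has_derivative:
  "distinct js \<Longrightarrow> bounded_functional F \<Longrightarrow>
    ((\<lambda>t. interpolation \<mu>1 \<mu>2 js t F) has_real_derivative
      (\<Sum>i\<in>set js. interpolation \<mu>1 \<mu>2 js t (integrate_at_diff \<mu>1 \<mu>2 i F))) (at t)"
proof (induction js arbitrary: F t)
  case Nil
  then show ?case by simp
next
  case (Cons j js)
  define G1 where "G1 = integrate_at \<mu>1 j F"
  define G2 where "G2 = integrate_at \<mu>2 j F"
  have G1: "bounded_functional G1" and G2: "bounded_functional G2"
    unfolding G1_def G2_def using Cons.prems
    by (simp_all add: bounded_functional_integrate_at1 bounded_functional_integrate_at2)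
  have j: "j \<notin> set js" and js: "distinct js"
    using Cons.prems by auto
  define D where "D G = (\<Sum>i\<in>set js. interpolation \<mu>1 \<mu>2 js t (integrate_at_diff \<mu>1 \<mu>2 i G))" for G
  have d1: "((\<lambda>t. interpolation \<mu>1 \<mu>2 js t G1) has_real_derivative D G1) (at t)"
    and d2: "((\<lambda>t. interpolation \<mu>1 \<mu>2 js t G2) has_real_derivative D G2) (at t)"
    unfolding D_def using Cons.IH[OF js] G1 G2 by auto
  \<comment> \<open>Differentiating the weights \<open>t\<close>, \<open>1 - t\<close> gives the term of site \<open>j\<close>, differentiating
    the inner interpolations gives the terms of the other sites.\<close>
  have "((\<lambda>t. t * interpolation \<mu>1 \<mu>2 js t G1 + (1 - t) * interpolation \<mu>1 \<mu>2 js t G2) has_real_derivative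
      interpolation \<mu>1 \<mu>2 js t G1 + t * D G1 - interpolation \<mu>1 \<mu>2 js t G2 + (1 - t) * D G2) (at t)"
    by (auto intro!: derivative_eq_intros d1 d2)
  moreover have "(\<lambda>t. interpolation \<mu>1 \<mu>2 (j # js) t F)
      = (\<lambda>t. t * interpolation \<mu>1 \<mu>2 js t G1 + (1 - t) * interpolation \<mu>1 \<mu>2 js t G2)"
    unfolding G1_def G2_def by (intro ext interpolation_Cons_split Cons.prems)
  moreover have "(\<Sum>i\<in>set (j # js). interpolation \<mu>1 \<mu>2 (j # js) t (integrate_at_diff \<mu>1 \<mu>2 i F))
      = interpolation \<mu>1 \<mu>2 js t G1 + t * D G1 - interpolation \<mu>1 \<mu>2 js t G2 + (1 - t) * D G2"
  proof -
    have "(\<Sum>i\<in>set js. interpolation \<mu>1 \<mu>2 (j # js) t (integrate_at_diff \<mu>1 \<mu>2 i F))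
        = (\<Sum>i\<in>set js. t * interpolation \<mu>1 \<mu>2 js t (integrate_at_diff \<mu>1 \<mu>2 i G1)
            + (1 - t) * interpolation \<mu>1 \<mu>2 js t (integrate_at_diff \<mu>1 \<mu>2 i G2))"
      unfolding G1_def G2_def using Cons.prems j
      by (intro sum.cong refl interpolation_Cons_diff_other) auto
    then show ?thesis
      unfolding D_def G1_def G2_def using Cons.prems j
      by (simp add: interpolation_Cons_diff_same sum.distrib sum_distrib_left del: interpolation.simps)
  qed
  ultimately show ?case
    by simp
qed

lemma interpolation_difference_le:
  assumes js: "distinct js" and F: "bounded_functional F"
    and W: "\<And>w. (\<Sum>i\<in>set js. \<bar>integrate_at_diff \<mu>1 \<mu>2 i F w\<bar>) \<le> W"
  shows "\<bar>interpolation \<mu>1 \<mu>2 js 1 F - interpolation \<mu>1 \<mu>2 js 0 F\<bar> \<le> W"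
proof -
  obtain z :: real where z: "0 < z" "z < 1" and mvt: "interpolation \<mu>1 \<mu>2 js 1 F - interpolation \<mu>1 \<mu>2 js 0 F
      = (\<Sum>i\<in>set js. interpolation \<mu>1 \<mu>2 js z (integrate_at_diff \<mu>1 \<mu>2 i F))"
    using MVT2[of 0 1 "\<lambda>t. interpolation \<mu>1 \<mu>2 js t F"
        "\<lambda>t. \<Sum>i\<in>set js. interpolation \<mu>1 \<mu>2 js t (integrate_at_diff \<mu>1 \<mu>2 i F)"]
      interpolation_has_derivative[OF js F] by auto
  have bounded: "\<And>i. bounded_functional (\<lambda>w. \<bar>integrate_at_diff \<mu>1 \<mu>2 i F w\<bar>)"
    using F by (intro bounded_functional_abs bounded_functional_integrate_at_diff)
  have "\<bar>\<Sum>i\<in>set js. interpolation \<mu>1 \<mu>2 js z (integrate_at_diff \<mu>1 \<mu>2 i F)\<bar>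
      \<le> (\<Sum>i\<in>set js. interpolation \<mu>1 \<mu>2 js z (\<lambda>w. \<bar>integrate_at_diff \<mu>1 \<mu>2 i F w\<bar>))"
    using z F by (intro order_trans[OF sum_abs] sum_mono abs_interpolation_le bounded_functional_integrate_at_diff) auto
  also have "\<dots> = interpolation \<mu>1 \<mu>2 js z (\<lambda>w. \<Sum>i\<in>set js. \<bar>integrate_at_diff \<mu>1 \<mu>2 i F w\<bar>)"
    using bounded by (simp add: interpolation_sum)
  also have "\<dots> \<le> interpolation \<mu>1 \<mu>2 js z (\<lambda>_. W)"
    using z W bounded by (intro interpolation_mono bounded_functional_sum bounded_functional_const) auto
  finally show ?thesis
    using mvt by (simp add: interpolation_const)
qed

end

section \<open>Taylor expansion of \<open>ln (P + Q e\<^sup>y)\<close>\<close>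

definition logistic_weight :: "real \<Rightarrow> real \<Rightarrow> real \<Rightarrow> real" where
  "logistic_weight P Q t = Q * exp t / (P + Q * exp t)"

context
  fixes P Q :: real
  assumes P: "P > 0" and Q: "Q > 0"
begin

lemma add_exp_pos: "P + Q * exp t > 0"
  using P Q by (simp add: add_pos_pos)

lemma logistic_weight_nonneg: "0 \<le> logistic_weight P Q t"
  and logistic_weight_le_1: "logistic_weight P Q t \<le> 1"
  using P Q add_exp_pos[of t] by (simp_all add: logistic_weight_def)

lemma has_real_derivative_ln_add_exp:
  "((\<lambda>t. ln (P + Q * exp t)) has_real_derivative logistic_weight P Q t) (at t)"
  using add_exp_pos[of t] by (auto intro!: derivative_eq_intros simp: logistic_weight_def)

lemma has_real_derivative_logistic_weight:
  "(logistic_weight P Q has_real_derivative logistic_weight P Q t * (1 - logistic_weight P Q t)) (at t)"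
proof -
  have "(logistic_weight P Q has_real_derivative
      (Q * exp t * (P + Q * exp t) - Q * exp t * (Q * exp t)) / (P + Q * exp t)\<^sup>2) (at t)"
    unfolding logistic_weight_def[abs_def] using add_exp_pos[of t]
    by (auto intro!: derivative_eq_intros simp: power2_eq_square)
  moreover have "(Q * exp t * (P + Q * exp t) - Q * exp t * (Q * exp t)) / (P + Q * exp t)\<^sup>2
      = logistic_weight P Q t * (1 - logistic_weight P Q t)"
    using add_exp_pos[of t] by (simp add: logistic_weight_def field_simps power2_eq_square)
  ultimately show ?thesis
    by simp
qed

lemma logistic_weight_le_exp_abs_diff:
  "logistic_weight P Q a \<le> exp \<bar>a - b\<bar> * logistic_weight P Q b"
proof -
  have "Q * exp a * (P + Q * exp b) \<le> exp \<bar>a - b\<bar> * (Q * exp b) * (P + Q * exp a)"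
  proof (cases "b \<le> a")
    case True
    then have "Q * exp a * (P + Q * exp b) \<le> Q * exp a * (P + Q * exp a)"
      using Q by (intro mult_left_mono) auto
    also have "\<dots> = exp \<bar>a - b\<bar> * (Q * exp b) * (P + Q * exp a)"
      using True by (simp add: mult_exp_exp)
    finally show ?thesis .
  next
    case False
    have "Q * exp a * (P + Q * exp b) = Q * (P * exp a) + Q * Q * (exp a * exp b)"
      by (simp add: algebra_simps)
    also have "\<dots> \<le> Q * (P * exp (2 * b - a)) + Q * Q * (exp (2 * b - a) * exp a)"
      using P Q False by (intro add_mono mult_left_mono) (auto simp: mult_exp_exp)
    also have "\<dots> = exp \<bar>a - b\<bar> * (Q * exp b) * (P + Q * exp a)"
      using False by (simp add: algebra_simps flip: exp_add)
    finally show ?thesis .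
  qed
  then show ?thesis
    using add_exp_pos[of a] add_exp_pos[of b]
    by (simp add: logistic_weight_def divide_simps mult.commute mult.left_commute)
qed

text \<open>The third derivative \<open>\<sigma> (1 - \<sigma>) (1 - 2 \<sigma>)\<close> is at most the logistic weight \<open>\<sigma>\<close> at an
  intermediate point, and \<open>\<sigma>\<close> varies by at most the factor \<open>e\<^sup>2\<^sup>r\<close> on \<open>[-r, r]\<close>.\<close>

lemma ln_add_exp_taylor2:
  assumes y: "\<bar>y\<bar> \<le> r" and y0: "\<bar>y0\<bar> \<le> r"
  shows "\<bar>ln (P + Q * exp y) - ln (P + Q) - Q / (P + Q) * y - P * Q / (P + Q)\<^sup>2 / 2 * y\<^sup>2\<bar>
    \<le> \<bar>y\<bar> ^ 3 / 6 * exp (2 * r) * logistic_weight P Q y0"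
proof -
  let ?\<sigma> = "logistic_weight P Q"
  define diff where "diff m = [\<lambda>t. ln (P + Q * exp t), ?\<sigma>, \<lambda>t. ?\<sigma> t * (1 - ?\<sigma> t),
    \<lambda>t. ?\<sigma> t * (1 - ?\<sigma> t) * (1 - 2 * ?\<sigma> t)] ! m" for m
  have "(diff m has_real_derivative diff (Suc m) t) (at t)" if "m < 3" for m t
  proof -
    have "((\<lambda>t. ?\<sigma> t * (1 - ?\<sigma> t)) has_real_derivative
        ?\<sigma> t * (1 - ?\<sigma> t) * (1 - ?\<sigma> t) + ?\<sigma> t * - (?\<sigma> t * (1 - ?\<sigma> t))) (at t)"
      by (auto intro!: derivative_eq_intros has_real_derivative_logistic_weight)
    then have "((\<lambda>t. ?\<sigma> t * (1 - ?\<sigma> t)) has_real_derivative ?\<sigma> t * (1 - ?\<sigma> t) * (1 - 2 * ?\<sigma> t)) (at t)"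
      by (simp add: algebra_simps)
    moreover have "m = 0 \<or> m = 1 \<or> m = 2"
      using that by auto
    ultimately show ?thesis
      by (auto simp: diff_def has_real_derivative_ln_add_exp has_real_derivative_logistic_weight)
  qed
  then obtain t where t: "\<bar>t\<bar> \<le> \<bar>y\<bar>"
    and taylor: "ln (P + Q * exp y) = (\<Sum>m<3. diff m 0 / fact m * y ^ m) + diff 3 t / fact 3 * y ^ 3"
    using Maclaurin_bi_le[of diff "\<lambda>t. ln (P + Q * exp t)" 3 y] by (auto simp: diff_def)
  have "(\<Sum>m<3. diff m 0 / fact m * y ^ m) = ln (P + Q) + Q / (P + Q) * y + P * Q / (P + Q)\<^sup>2 / 2 * y\<^sup>2"
    using add_exp_pos[of 0]
    by (simp add: diff_def logistic_weight_def numeral_3_eq_3 eval_nat_numeral field_simps power2_eq_square)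
  then have remainder: "\<bar>ln (P + Q * exp y) - ln (P + Q) - Q / (P + Q) * y - P * Q / (P + Q)\<^sup>2 / 2 * y\<^sup>2\<bar>
      = \<bar>diff 3 t\<bar> / 6 * \<bar>y\<bar> ^ 3"
    using taylor by (simp add: fact_numeral abs_mult power_abs)
  have "\<bar>diff 3 t\<bar> = ?\<sigma> t * ((1 - ?\<sigma> t) * \<bar>1 - 2 * ?\<sigma> t\<bar>)"
    using logistic_weight_nonneg[of t] logistic_weight_le_1[of t] by (simp add: diff_def abs_mult)
  also have "\<dots> \<le> ?\<sigma> t"
    using logistic_weight_nonneg[of t] logistic_weight_le_1[of t]
    by (intro mult_right_le_one_le mult_le_one) (auto simp: abs_if)
  also have "\<dots> \<le> exp \<bar>t - y0\<bar> * ?\<sigma> y0"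
    by (rule logistic_weight_le_exp_abs_diff)
  also have "\<dots> \<le> exp (2 * r) * ?\<sigma> y0"
    using t y y0 logistic_weight_nonneg[of y0] by (intro mult_right_mono) auto
  finally have "\<bar>diff 3 t\<bar> / 6 * \<bar>y\<bar> ^ 3 \<le> exp (2 * r) * ?\<sigma> y0 / 6 * \<bar>y\<bar> ^ 3"
    by (intro mult_right_mono divide_right_mono) auto
  then show ?thesis
    unfolding remainder by (simp add: mult_ac)
qed

end

lemma ln_add_exp_tilt_quadratic_approx:
  fixes P Q lam C u :: real
  assumes P: "0 \<le> P" and Q: "0 \<le> Q" and lam: "0 \<le> lam" "lam \<le> 1" and C: "0 \<le> C" and u: "\<bar>u\<bar> \<le> C"
  obtains \<alpha> \<beta> \<gamma> where "\<And>s. \<bar>s\<bar> \<le> C \<Longrightarrow>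
    \<bar>ln (P + Q * exp (-2 * lam * (s - u))) - \<alpha> - \<beta> * s - \<gamma> * s\<^sup>2\<bar> \<le> 4 / 3 * C ^ 3 * exp (4 * C) * lam ^ 3 * (Q / (P + Q))"
proof -
  have bound_nonneg: "0 \<le> 4 / 3 * C ^ 3 * exp (4 * C) * lam ^ 3 * (Q / (P + Q))"
    using P Q C lam by simp
  consider "Q = 0" | "P = 0" "Q > 0" | "P > 0" "Q > 0"
    using P Q by linarith
  then show ?thesis
  proof cases
    case 1
    then show ?thesis
      using bound_nonneg by (intro that[of "ln P" 0 0]) auto
  next
    case 2
    then have "ln (P + Q * exp (-2 * lam * (s - u))) = (ln Q + 2 * lam * u) + (-2 * lam) * s" for s
      by (simp add: ln_mult algebra_simps)
    then show ?thesis
      using bound_nonneg by (intro that[of "ln Q + 2 * lam * u" "-2 * lam" 0]) auto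
  next
    case 3
    define Q' where "Q' = Q * exp (2 * lam * u)"
    have "Q' > 0"
      using 3 by (simp add: Q'_def)
    have weight: "logistic_weight P Q' (-2 * lam * u) = Q / (P + Q)"
      by (simp add: logistic_weight_def Q'_def mult.assoc flip: exp_add)
    show ?thesis
    proof (rule that[of "ln (P + Q')" "Q' / (P + Q') * (-2 * lam)" "P * Q' / (P + Q')\<^sup>2 / 2 * (2 * lam)\<^sup>2"])
      fix s :: real
      assume s: "\<bar>s\<bar> \<le> C"
      define y where "y = -2 * lam * s"
      have y: "\<bar>y\<bar> \<le> 2 * lam * C" and u': "\<bar>-2 * lam * u\<bar> \<le> 2 * lam * C"
        using s u lam by (simp_all add: y_def abs_mult mult_left_mono)
      have "ln (P + Q * exp (-2 * lam * (s - u))) - ln (P + Q') - Q' / (P + Q') * (-2 * lam) * s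
          - P * Q' / (P + Q')\<^sup>2 / 2 * (2 * lam)\<^sup>2 * s\<^sup>2
        = ln (P + Q' * exp y) - ln (P + Q') - Q' / (P + Q') * y - P * Q' / (P + Q')\<^sup>2 / 2 * y\<^sup>2"
        by (simp add: y_def Q'_def mult.assoc power_mult_distrib right_diff_distrib flip: exp_add)
      also have "\<bar>\<dots>\<bar> \<le> \<bar>y\<bar> ^ 3 / 6 * exp (2 * (2 * lam * C)) * (Q / (P + Q))"
        using ln_add_exp_taylor2[OF \<open>P > 0\<close> \<open>Q' > 0\<close> y u'] unfolding weight .
      also have "\<dots> \<le> (2 * lam * C) ^ 3 / 6 * exp (4 * C) * (Q / (P + Q))"
        using y lam C 3
        by (intro mult_right_mono mult_mono divide_right_mono power_mono) (auto intro: mult_left_le_one_le)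
      also have "\<dots> = 4 / 3 * C ^ 3 * exp (4 * C) * lam ^ 3 * (Q / (P + Q))"
        by (simp add: power_mult_distrib)
      finally show "\<bar>ln (P + Q * exp (-2 * lam * (s - u))) - ln (P + Q') - Q' / (P + Q') * (-2 * lam) * s
          - P * Q' / (P + Q')\<^sup>2 / 2 * (2 * lam)\<^sup>2 * s\<^sup>2\<bar> \<le> 4 / 3 * C ^ 3 * exp (4 * C) * lam ^ 3 * (Q / (P + Q))" .
    qed
  qed
qed

lemma integral_quadratic_approx:
  fixes M :: "real measure" and f :: "real \<Rightarrow> real"
  assumes "prob_space M" "sets M = sets borel" and bounded: "AE s in M. \<bar>s\<bar> \<le> C"
    and mean: "(\<integral>s. s \<partial>M) = 0" and second_moment: "(\<integral>s. s\<^sup>2 \<partial>M) = 1"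
    and f: "f \<in> borel_measurable borel" and approx: "AE s in M. \<bar>f s - \<alpha> - \<beta> * s - \<gamma> * s\<^sup>2\<bar> \<le> E"
  shows "\<bar>(\<integral>s. f s \<partial>M) - (\<alpha> + \<gamma>)\<bar> \<le> E"
proof -
  interpret prob_space M by fact
  have borel_M: "g \<in> borel_measurable M" if "g \<in> borel_measurable borel" for g :: "real \<Rightarrow> real"
    using that measurable_cong_sets[OF \<open>sets M = sets borel\<close> refl] by blast
  define g where "g s = f s - \<alpha> - \<beta> * s - \<gamma> * s\<^sup>2" for s
  have "g \<in> borel_measurable borel"
    unfolding g_def[abs_def] using f by measurable
  then have int_g: "integrable M g"
    using approx by (intro integrable_const_bound[where B = E] borel_M) (auto simp: g_def)
  have int_s: "integrable M (\<lambda>s. s)"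
    using bounded by (intro integrable_const_bound[where B = C] borel_M) auto
  have "AE s in M. norm (s\<^sup>2) \<le> C\<^sup>2"
    using bounded by eventually_elim (simp add: abs_le_square_iff[of _ C, symmetric])
  then have int_s2: "integrable M (\<lambda>s. s\<^sup>2)"
    by (intro integrable_const_bound[where B = "C\<^sup>2"] borel_M) auto
  have "(\<integral>s. f s \<partial>M) = (\<integral>s. g s + \<alpha> + \<beta> * s + \<gamma> * s\<^sup>2 \<partial>M)"
    by (simp add: g_def)
  also have "\<dots> = (\<integral>s. g s \<partial>M) + \<alpha> + \<gamma>"
    using int_g int_s int_s2 mean second_moment by (simp add: prob_space)
  finally have "\<bar>(\<integral>s. f s \<partial>M) - (\<alpha> + \<gamma>)\<bar> = \<bar>\<integral>s. g s \<partial>M\<bar>"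
    by simp
  also have "\<dots> \<le> (\<integral>s. \<bar>g s\<bar> \<partial>M)"
    using integral_norm_bound[of M g] by simp
  also have "\<dots> \<le> E"
    using approx int_g by (intro integral_le_const integrable_abs) (simp_all add: g_def[symmetric])
  finally show ?thesis .
qed

section \<open>The partition function\<close>

definition energy :: "nat \<Rightarrow> real \<Rightarrow> (nat \<Rightarrow> real) \<Rightarrow> (nat \<Rightarrow> int) \<Rightarrow> real" where
  "energy N h w x = (\<Sum>n=1..N. (w n + h) * Delta x n)"

lemma Zpart_eq_energy:
  "Zpart N lam h w A = (\<Sum>x\<in>{x\<in>walk_paths N. A x}. exp (-2 * lam * energy N h w x)) / 2 ^ N"
  by (simp add: Zpart_def energy_def)

lemma finite_walk_paths: "finite {x\<in>walk_paths N. A x}"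
  by (rule finite_subset[of _ "walk_paths N"]) (auto simp: walk_paths_def intro!: finite_PiE)

lemma Delta_nonneg: "0 \<le> Delta x n"
  and Delta_le_1: "Delta x n \<le> 1"
  by (auto simp: Delta_def walk_sign_def sgn_if)

lemma Delta_cases:
  assumes x: "x \<in> walk_paths N" and i: "i \<in> {1..N}"
  shows "Delta x i = 0 \<or> Delta x i = 1"
proof -
  obtain k where k: "i = Suc k" "k < N"
    using i by (cases i) auto
  then have "x k = -1 \<or> x k = 1"
    using x by (auto simp: walk_paths_def PiE_iff)
  moreover have "walk x i = walk x k + x k"
    by (simp add: walk_def k)
  ultimately have "walk_sign x i = -1 \<or> walk_sign x i = 1"
    by (auto simp: walk_sign_def k sgn_if)
  then show ?thesis
    by (auto simp: Delta_def)
qed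

lemma calN_le: "calN x N \<le> real N"
  using sum_mono[of "{1..N}" "Delta x" "\<lambda>_. 1"] by (simp add: calN_def Delta_le_1)

lemma energy_fun_upd:
  assumes "i \<in> {1..N}"
  shows "energy N h (w(i := v)) x = energy N h w x + (v - w i) * Delta x i"
proof -
  have "energy N h (w(i := v)) x - energy N h w x = (\<Sum>n=1..N. ((w(i := v)) n - w n) * Delta x n)"
    by (simp add: energy_def sum_subtractf[symmetric] algebra_simps)
  also have "\<dots> = (v - w i) * Delta x i"
    using assms by (subst sum.remove[of _ i]) auto
  finally show ?thesis
    by simp
qed

text \<open>Since \<open>Delta x i \<in> {0, 1}\<close>, the partition function is affine in the Boltzmann factor of site \<open>i\<close>.\<close>

lemma Zpart_fun_upd:
  assumes i: "i \<in> {1..N}"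
  shows "Zpart N lam h (w(i := v)) A =
     (\<Sum>x | x \<in> walk_paths N \<and> A x. exp (-2 * lam * energy N h w x) * (1 - Delta x i)) / 2 ^ N
     + (\<Sum>x | x \<in> walk_paths N \<and> A x. exp (-2 * lam * energy N h w x) * Delta x i) / 2 ^ N
       * exp (-2 * lam * (v - w i))"
proof -
  define S where "S = {x\<in>walk_paths N. A x}"
  have "exp (-2 * lam * energy N h (w(i := v)) x)
      = exp (-2 * lam * energy N h w x) * (1 - Delta x i)
        + exp (-2 * lam * energy N h w x) * Delta x i * exp (-2 * lam * (v - w i))"
    if "x \<in> S" for x
  proof -
    have "exp (-2 * lam * energy N h (w(i := v)) x)
        = exp (-2 * lam * energy N h w x) * exp (-2 * lam * (v - w i) * Delta x i)"
      by (simp add: energy_fun_upd[OF i] algebra_simps flip: exp_add)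
    moreover have "Delta x i = 0 \<or> Delta x i = 1"
      using that i by (intro Delta_cases) (auto simp: S_def)
    ultimately show ?thesis
      by auto
  qed
  then show ?thesis
    unfolding Zpart_eq_energy Collect_conj_eq[symmetric] S_def[symmetric]
    by (simp add: sum.distrib sum_distrib_right add_divide_distrib)
qed

lemma energy_abs_le:
  assumes "\<And>n. \<bar>w n\<bar> \<le> C" "0 \<le> h"
  shows "\<bar>energy N h w x\<bar> \<le> real N * (C + h)"
proof -
  have "\<bar>(w n + h) * Delta x n\<bar> \<le> C + h" for n
    using assms(1)[of n] assms(2) Delta_nonneg[of x n] Delta_le_1[of x n]
    by (simp add: abs_mult mult_le_one order_trans[OF mult_right_le_one_le] abs_triangle_ineq)
  then have "\<bar>energy N h w x\<bar> \<le> (\<Sum>n=1..N. C + h)"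
    unfolding energy_def by (intro order_trans[OF sum_abs] sum_mono)
  then show ?thesis
    by simp
qed

lemma Zpart_bounds:
  assumes "\<And>n. \<bar>w n\<bar> \<le> C" "0 \<le> h" "0 \<le> lam" "lam \<le> 1" and "z \<in> walk_paths N" "A z"
  defines "B \<equiv> 2 * real N * (C + h)"
  shows "exp (- B) / 2 ^ N \<le> Zpart N lam h w A"
    and "Zpart N lam h w A \<le> card {x\<in>walk_paths N. A x} * exp B / 2 ^ N"
proof -
  have "\<bar>-2 * lam * energy N h w x\<bar> \<le> B" for x
  proof -
    have "\<bar>energy N h w x\<bar> \<le> real N * (C + h)"
      using assms(1,2) by (rule energy_abs_le)
    from mult_mono[OF assms(4) this] have "lam * \<bar>energy N h w x\<bar> \<le> 1 * (real N * (C + h))"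
      by simp
    then show ?thesis
      using assms(3) by (simp add: B_def abs_mult)
  qed
  then have exp_bounds: "exp (- B) \<le> exp (-2 * lam * energy N h w x)"
    "exp (-2 * lam * energy N h w x) \<le> exp B" for x
    by (simp_all add: abs_le_iff)
  have "exp (- B) \<le> (\<Sum>x\<in>{x\<in>walk_paths N. A x}. exp (-2 * lam * energy N h w x))"
    using exp_bounds(1)[of z] assms(5,6)
    by (intro order_trans[OF _ member_le_sum[of z]]) (auto intro: finite_walk_paths)
  then show "exp (- B) / 2 ^ N \<le> Zpart N lam h w A"
    unfolding Zpart_eq_energy by (simp add: divide_right_mono)
  have "(\<Sum>x\<in>{x\<in>walk_paths N. A x}. exp (-2 * lam * energy N h w x)) \<le> card {x\<in>walk_paths N. A x} * exp B"
    using sum_mono[OF exp_bounds(2)] by simp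
  then show "Zpart N lam h w A \<le> card {x\<in>walk_paths N. A x} * exp B / 2 ^ N"
    unfolding Zpart_eq_energy by (simp add: divide_right_mono)
qed

definition free_energy_on ::
    "nat \<Rightarrow> real \<Rightarrow> real \<Rightarrow> ((nat \<Rightarrow> int) \<Rightarrow> bool) \<Rightarrow> (nat \<Rightarrow> real) \<Rightarrow> real" where
  "free_energy_on N lam h A w = ln (Zpart N lam h w A) / real N"

definition gibbs_Delta ::
    "nat \<Rightarrow> real \<Rightarrow> real \<Rightarrow> ((nat \<Rightarrow> int) \<Rightarrow> bool) \<Rightarrow> (nat \<Rightarrow> real) \<Rightarrow> nat \<Rightarrow> real" where
  "gibbs_Delta N lam h A w i =
    (\<Sum>x | x \<in> walk_paths N \<and> A x. exp (-2 * lam * energy N h w x) * Delta x i)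
      / (\<Sum>x | x \<in> walk_paths N \<and> A x. exp (-2 * lam * energy N h w x))"

text \<open>The disorder is bounded only almost surely; clipping it makes the free energy a bounded
  functional without changing its integrals.\<close>

definition clip :: "real \<Rightarrow> real \<Rightarrow> real" where
  "clip C s = max (- C) (min C s)"

lemma abs_clip_le: "0 \<le> C \<Longrightarrow> \<bar>clip C s\<bar> \<le> C"
  by (auto simp: clip_def)

lemma clip_eq: "\<bar>s\<bar> \<le> C \<Longrightarrow> clip C s = s"
  by (auto simp: clip_def)

lemma borel_measurable_clip [measurable]: "clip C \<in> borel_measurable borel"
  unfolding clip_def by measurable

lemma free_energy_on_cong:
  assumes "\<And>n. n \<in> {1..N} \<Longrightarrow> w n = w' n"
  shows "free_energy_on N lam h A w = free_energy_on N lam h A w'"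
proof -
  have "energy N h w x = energy N h w' x" for x
    using assms by (simp add: energy_def)
  then show ?thesis
    by (simp add: free_energy_on_def Zpart_eq_energy)
qed

lemma free_energy_on_measurable: "free_energy_on N lam h A \<in> borel_measurable seq_borel"
  unfolding free_energy_on_def Zpart_def seq_borel_def by measurable

lemma free_energy_on_clip_measurable:
  "(\<lambda>w. free_energy_on N lam h A (clip C \<circ> w)) \<in> borel_measurable seq_borel"
proof -
  have "(\<lambda>w. clip C \<circ> w) \<in> measurable seq_borel seq_borel"
    unfolding seq_borel_def by (rule measurable_PiM_single') (auto simp: space_PiM)
  then show ?thesis
    using free_energy_on_measurable by (rule measurable_compose)
qed

lemma bounded_functional_free_energy_on_clip:
  assumes "0 \<le> lam" "lam \<le> 1" "0 \<le> h" "0 \<le> C"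
  shows "bounded_functional (\<lambda>w. free_energy_on N lam h A (clip C \<circ> w))"
proof -
  define B where "B = 2 * real N * (C + h)"
  define a where "a = exp (- B) / 2 ^ N"
  define b where "b = card {x\<in>walk_paths N. A x} * exp B / 2 ^ N"
  have "\<bar>free_energy_on N lam h A (clip C \<circ> w)\<bar> \<le> (\<bar>ln a\<bar> + \<bar>ln b\<bar>) / real N" for w
  proof (cases "\<exists>x0\<in>walk_paths N. A x0")
    case True
    then obtain x0 where x0: "x0 \<in> walk_paths N" "A x0"
      by blast
    have "\<bar>(clip C \<circ> w) n\<bar> \<le> C" for n
      using abs_clip_le[OF assms(4)] by simp
    from Zpart_bounds[where w = "clip C \<circ> w" and A = A and z = x0, OF this assms(3,1,2) x0]
    have Z: "a \<le> Zpart N lam h (clip C \<circ> w) A" "Zpart N lam h (clip C \<circ> w) A \<le> b"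
      by (simp_all add: a_def b_def B_def)
    moreover have "0 < a"
      by (simp add: a_def)
    ultimately have "ln a \<le> ln (Zpart N lam h (clip C \<circ> w) A)" "ln (Zpart N lam h (clip C \<circ> w) A) \<le> ln b"
      by simp_all
    then have "\<bar>ln (Zpart N lam h (clip C \<circ> w) A)\<bar> \<le> \<bar>ln a\<bar> + \<bar>ln b\<bar>"
      by linarith
    then show ?thesis
      by (simp add: free_energy_on_def divide_right_mono)
  next
    case False
    then have no_paths: "{x\<in>walk_paths N. A x} = {}"
      by auto
    have "Zpart N lam h (clip C \<circ> w) A = 0"
      unfolding Zpart_def no_paths by simp
    then show ?thesis
      by (simp add: free_energy_on_def)
  qed
  then show ?thesis
    using free_energy_on_clip_measurable unfolding bounded_functional_def by blast
qed

lemma sum_gibbs_Delta_le: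
  assumes "0 \<le> W" and calN_le: "\<And>x. x \<in> walk_paths N \<Longrightarrow> A x \<Longrightarrow> calN x N \<le> W"
  shows "(\<Sum>i=1..N. gibbs_Delta N lam h A w i) \<le> W"
proof -
  define S where "S = {x. x \<in> walk_paths N \<and> A x}"
  define e where "e x = exp (-2 * lam * energy N h w x)" for x
  have "(\<Sum>i=1..N. \<Sum>x\<in>S. e x * Delta x i) = (\<Sum>x\<in>S. e x * calN x N)"
    unfolding calN_def sum_distrib_left by (rule sum.swap)
  then have "(\<Sum>i=1..N. gibbs_Delta N lam h A w i) = (\<Sum>x\<in>S. e x * calN x N) / (\<Sum>x\<in>S. e x)"
    unfolding gibbs_Delta_def S_def[symmetric] e_def[symmetric] by (simp add: sum_divide_distrib[symmetric])
  also have "\<dots> \<le> (\<Sum>x\<in>S. e x * W) / (\<Sum>x\<in>S. e x)"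
    using calN_le by (intro divide_right_mono sum_mono mult_left_mono sum_nonneg) (auto simp: S_def e_def)
  also have "\<dots> \<le> W"
    using \<open>0 \<le> W\<close> by (cases "(\<Sum>x\<in>S. e x) = 0") (simp_all add: sum_distrib_right[symmetric])
  finally show ?thesis .
qed

section \<open>Comparison of the free energies\<close>

lemma integral_iid_law_eq_PiM:
  fixes G :: "(nat \<Rightarrow> real) \<Rightarrow> real"
  assumes prob_M: "prob_space M" and sets_M: "sets M = sets borel" and "finite I"
    and G: "G \<in> borel_measurable seq_borel" and local: "\<And>w. G (restrict w I) = G w"
  shows "(\<integral>w. G w \<partial>iid_law M) = (\<integral>w. G w \<partial>(\<Pi>\<^sub>M i\<in>I. M))"
proof -
  interpret product_prob_space "\<lambda>_. M" UNIV
    using prob_M by (simp add: product_prob_space_def product_prob_space_axioms_def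
        product_sigma_finite_def prob_space_imp_sigma_finite)
  have G_I: "G \<in> borel_measurable (\<Pi>\<^sub>M i\<in>I. M)"
    by (rule measurable_compose[OF measurable_id_PiM_seq_borel[OF sets_M] G])
  have "(\<integral>w. G w \<partial>(\<Pi>\<^sub>M i\<in>I. M)) = (\<integral>w. G w \<partial>distr (\<Pi>\<^sub>M i\<in>UNIV. M) (\<Pi>\<^sub>M i\<in>I. M) (\<lambda>w. restrict w I))"
    using \<open>finite I\<close> by (subst distr_PiM_restrict_finite) auto
  also have "\<dots> = (\<integral>w. G (restrict w I) \<partial>(\<Pi>\<^sub>M i\<in>UNIV. M))"
    by (rule integral_distr) (auto intro: measurable_restrict_subset G_I)
  finally show ?thesis
    by (simp add: iid_law_def local)
qed

lemma integral_iid_law_free_energy_on: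
  assumes prob_M: "prob_space M" and sets_M: "sets M = sets borel" and bounded: "AE s in M. \<bar>s\<bar> \<le> C"
    and "0 \<le> lam" "lam \<le> 1" "0 \<le> h" "0 \<le> C"
  shows "(\<integral>w. free_energy_on N lam h A w \<partial>iid_law M)
    = iterated_integral M [1..<N+1] (\<lambda>w. free_energy_on N lam h A (clip C \<circ> w))"
proof -
  have sets_iid: "sets (iid_law M) = sets seq_borel"
    unfolding iid_law_def seq_borel_def using sets_M by (intro sets_PiM_cong) auto
  have "AE w in iid_law M. \<forall>n\<in>{1..N}. \<bar>w n\<bar> \<le> C"
    unfolding iid_law_def using bounded prob_M by (intro AE_finite_allI AE_PiM_component) auto
  then have "AE w in iid_law M. free_energy_on N lam h A w = free_energy_on N lam h A (clip C \<circ> w)"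
    by eventually_elim (intro free_energy_on_cong, simp add: clip_eq)
  then have "(\<integral>w. free_energy_on N lam h A w \<partial>iid_law M)
      = (\<integral>w. free_energy_on N lam h A (clip C \<circ> w) \<partial>iid_law M)"
    using free_energy_on_measurable free_energy_on_clip_measurable
    by (intro integral_cong_AE) (simp_all add: measurable_cong_sets[OF sets_iid refl])
  also have "\<dots> = (\<integral>w. free_energy_on N lam h A (clip C \<circ> w) \<partial>(\<Pi>\<^sub>M i\<in>{1..N}. M))"
    using free_energy_on_clip_measurable
    by (intro integral_iid_law_eq_PiM prob_M sets_M free_energy_on_cong) auto
  also have "\<dots> = iterated_integral M [1..<N+1] (\<lambda>w. free_energy_on N lam h A (clip C \<circ> w))"
    using iterated_integral_eq_PiM[OF prob_M sets_M distinct_upt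
        bounded_functional_free_energy_on_clip[OF assms(4-)], of 1 "N + 1"]
    unfolding set_upt Suc_eq_plus1[symmetric] atLeastLessThanSuc_atLeastAtMost by (rule sym)
  finally show ?thesis .
qed

locale two_disorder_laws = two_laws +
  fixes C :: real
  assumes C_nonneg: "0 \<le> C"
    and bounded_\<mu>1: "AE s in \<mu>1. \<bar>s\<bar> \<le> C" and bounded_\<mu>2: "AE s in \<mu>2. \<bar>s\<bar> \<le> C"
    and mean_\<mu>1: "(\<integral>s. s \<partial>\<mu>1) = 0" and mean_\<mu>2: "(\<integral>s. s \<partial>\<mu>2) = 0"
    and second_moment_\<mu>1: "(\<integral>s. s\<^sup>2 \<partial>\<mu>1) = 1" and second_moment_\<mu>2: "(\<integral>s. s\<^sup>2 \<partial>\<mu>2) = 1"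
begin

lemma abs_integral_clip_diff_le:
  assumes L: "L \<in> borel_measurable borel"
    and approx: "\<And>s. \<bar>s\<bar> \<le> C \<Longrightarrow> \<bar>L s - \<alpha> - \<beta> * s - \<gamma> * s\<^sup>2\<bar> \<le> E"
  shows "\<bar>(\<integral>s. L (clip C s) \<partial>\<mu>1) - (\<integral>s. L (clip C s) \<partial>\<mu>2)\<bar> \<le> 2 * E"
proof -
  have "\<bar>(\<integral>s. L (clip C s) \<partial>M) - (\<alpha> + \<gamma>)\<bar> \<le> E"
    if "prob_space M" "sets M = sets borel" "AE s in M. \<bar>s\<bar> \<le> C"
      "(\<integral>s. s \<partial>M) = 0" "(\<integral>s. s\<^sup>2 \<partial>M) = 1" for M
  proof (rule integral_quadratic_approx[OF that])
    show "(\<lambda>s. L (clip C s)) \<in> borel_measurable borel"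
      using L by measurable
    show "AE s in M. \<bar>L (clip C s) - \<alpha> - \<beta> * s - \<gamma> * s\<^sup>2\<bar> \<le> E"
      using that(3) by eventually_elim (metis approx clip_eq)
  qed
  from this[OF M1.prob_space_axioms sets_\<mu>1 bounded_\<mu>1 mean_\<mu>1 second_moment_\<mu>1]
    this[OF M2.prob_space_axioms sets_\<mu>2 bounded_\<mu>2 mean_\<mu>2 second_moment_\<mu>2]
  show ?thesis
    by linarith
qed

lemma abs_integrate_at_diff_free_energy_on_le:
  assumes i: "i \<in> {1..N}" and lam: "0 \<le> lam" "lam \<le> 1"
  shows "\<bar>integrate_at_diff \<mu>1 \<mu>2 i (\<lambda>w. free_energy_on N lam h A (clip C \<circ> w)) w\<bar>
    \<le> 8 / 3 * C ^ 3 * exp (4 * C) * lam ^ 3 * gibbs_Delta N lam h A (clip C \<circ> w) i / real N"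
proof -
  define u where "u = clip C \<circ> w"
  define e where "e x = exp (-2 * lam * energy N h u x)" for x
  define P where "P = (\<Sum>x | x \<in> walk_paths N \<and> A x. e x * (1 - Delta x i)) / 2 ^ N"
  define Q where "Q = (\<Sum>x | x \<in> walk_paths N \<and> A x. e x * Delta x i) / 2 ^ N"
  define L where "L v = ln (P + Q * exp (-2 * lam * (v - u i)))" for v
  define K where "K = 4 / 3 * C ^ 3 * exp (4 * C) * lam ^ 3"
  have "0 \<le> P" "0 \<le> Q"
    unfolding P_def Q_def e_def using Delta_le_1 Delta_nonneg
    by (auto intro!: sum_nonneg divide_nonneg_nonneg mult_nonneg_nonneg)
  moreover have "\<bar>u i\<bar> \<le> C"
    using abs_clip_le[OF C_nonneg] by (simp add: u_def)
  ultimately obtain \<alpha> \<beta> \<gamma>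
    where approx: "\<And>s. \<bar>s\<bar> \<le> C \<Longrightarrow> \<bar>L s - \<alpha> - \<beta> * s - \<gamma> * s\<^sup>2\<bar> \<le> K * (Q / (P + Q))"
    using ln_add_exp_tilt_quadratic_approx[OF _ _ lam C_nonneg] unfolding L_def K_def by blast
  have site: "free_energy_on N lam h A (clip C \<circ> w(i := s)) = L (clip C s) / real N" for s
  proof -
    have "clip C \<circ> w(i := s) = u(i := clip C s)"
      by (auto simp: u_def)
    then show ?thesis
      by (simp add: free_energy_on_def L_def P_def Q_def e_def Zpart_fun_upd[OF i])
  qed
  have "L \<in> borel_measurable borel"
    unfolding L_def[abs_def] by measurable
  have "\<bar>integrate_at_diff \<mu>1 \<mu>2 i (\<lambda>w. free_energy_on N lam h A (clip C \<circ> w)) w\<bar>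
      = \<bar>(\<integral>s. L (clip C s) \<partial>\<mu>1) - (\<integral>s. L (clip C s) \<partial>\<mu>2)\<bar> / real N"
    by (simp add: integrate_at_diff_def integrate_at_def site abs_divide flip: diff_divide_distrib)
  also have "\<dots> \<le> 2 * (K * (Q / (P + Q))) / real N"
    using abs_integral_clip_diff_le[OF \<open>L \<in> borel_measurable borel\<close> approx] by (rule divide_right_mono) simp_all
  also have "Q / (P + Q) = gibbs_Delta N lam h A u i"
    by (simp add: gibbs_Delta_def P_def Q_def e_def algebra_simps
        flip: add_divide_distrib sum.distrib)
  also have "2 * (K * gibbs_Delta N lam h A u i) / real N
      = 8 / 3 * C ^ 3 * exp (4 * C) * lam ^ 3 * gibbs_Delta N lam h A u i / real N"
    by (simp add: K_def)
  finally show ?thesis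
    unfolding u_def .
qed

lemma free_energy_on_comparison:
  assumes lam: "0 \<le> lam" "lam \<le> 1" and "0 \<le> h" "0 \<le> W"
    and calN_le: "\<And>x. x \<in> walk_paths N \<Longrightarrow> A x \<Longrightarrow> calN x N \<le> W"
  shows "\<bar>(\<integral>w. free_energy_on N lam h A w \<partial>iid_law \<mu>1) - (\<integral>w. free_energy_on N lam h A w \<partial>iid_law \<mu>2)\<bar>
    \<le> 8 / 3 * C ^ 3 * exp (4 * C) * lam ^ 3 * W / real N"
proof -
  define F where "F w = free_energy_on N lam h A (clip C \<circ> w)" for w
  define K where "K = 8 / 3 * C ^ 3 * exp (4 * C) * lam ^ 3"
  have F: "bounded_functional F"
    unfolding F_def[abs_def] using assms C_nonneg by (intro bounded_functional_free_energy_on_clip)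
  have "(\<Sum>i\<in>set [1..<N+1]. \<bar>integrate_at_diff \<mu>1 \<mu>2 i F w\<bar>) \<le> K * W / real N" for w
  proof -
    have "(\<Sum>i\<in>set [1..<N+1]. \<bar>integrate_at_diff \<mu>1 \<mu>2 i F w\<bar>)
        \<le> (\<Sum>i=1..N. K * gibbs_Delta N lam h A (clip C \<circ> w) i / real N)"
      unfolding set_upt Suc_eq_plus1[symmetric] atLeastLessThanSuc_atLeastAtMost F_def[abs_def] K_def
      by (intro sum_mono abs_integrate_at_diff_free_energy_on_le lam)
    also have "\<dots> = K * (\<Sum>i=1..N. gibbs_Delta N lam h A (clip C \<circ> w) i) / real N"
      by (simp add: sum_divide_distrib[symmetric] sum_distrib_left)
    also have "\<dots> \<le> K * W / real N"
      using lam C_nonneg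
      by (intro divide_right_mono mult_left_mono sum_gibbs_Delta_le \<open>0 \<le> W\<close> calN_le) (auto simp: K_def)
    finally show ?thesis .
  qed
  moreover have "(\<integral>w. free_energy_on N lam h A w \<partial>iid_law \<mu>1) = interpolation \<mu>1 \<mu>2 [1..<N+1] 1 F"
    unfolding interpolation_1 F_def[abs_def]
    by (rule integral_iid_law_free_energy_on[OF M1.prob_space_axioms sets_\<mu>1 bounded_\<mu>1 assms(1-3) C_nonneg])
  moreover have "(\<integral>w. free_energy_on N lam h A w \<partial>iid_law \<mu>2) = interpolation \<mu>1 \<mu>2 [1..<N+1] 0 F"
    unfolding interpolation_0 F_def[abs_def]
    by (rule integral_iid_law_free_energy_on[OF M2.prob_space_axioms sets_\<mu>2 bounded_\<mu>2 assms(1-3) C_nonneg])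
  ultimately show ?thesis
    using interpolation_difference_le[OF distinct_upt F] unfolding K_def by presburger
qed

lemma free_energy_m_comparison:
  assumes "0 \<le> lam" "lam \<le> 1" "0 \<le> h"
  shows "\<bar>(\<integral>\<omega>. free_energy_m a N \<omega> lam h m \<partial>iid_law \<mu>1) - (\<integral>\<omega>. free_energy_m a N \<omega> lam h m \<partial>iid_law \<mu>2)\<bar>
    \<le> 8 / 3 * C ^ 3 * exp (4 * C) * lam ^ 3 * real m / real N"
  using free_energy_on_comparison[OF assms, of "real m" N "\<lambda>x. Omega a N x \<and> calN x N = real m"]
  by (simp add: free_energy_m_def free_energy_on_def[abs_def])

lemma free_energy_comparison:
  assumes "0 \<le> lam" "lam \<le> 1" "0 \<le> h" "0 < N"
  shows "\<bar>(\<integral>\<omega>. free_energy a N \<omega> lam h \<partial>iid_law \<mu>1) - (\<integral>\<omega>. free_energy a N \<omega> lam h \<partial>iid_law \<mu>2)\<bar>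
    \<le> 8 / 3 * C ^ 3 * exp (4 * C) * lam ^ 3"
  using free_energy_on_comparison[OF assms(1-3), of "real N" N "Omega a N"] \<open>0 < N\<close>
  by (simp add: free_energy_def free_energy_on_def[abs_def] calN_le)

end

lemma good_law_mean_zero:
  assumes "good_law \<mu>"
  shows "(\<integral>s. s \<partial>\<mu>) = 0"
proof -
  have "sets \<mu> = sets borel" and symmetric: "distr \<mu> borel uminus = \<mu>"
    using assms by (auto simp: good_law_def)
  then have "uminus \<in> borel_measurable \<mu>"
    using measurable_cong_sets by fastforce
  then have "(\<integral>s. s \<partial>\<mu>) = (\<integral>s. - s \<partial>\<mu>)"
    by (subst (1) symmetric[symmetric]) (simp add: integral_distr)
  then show ?thesis
    by simp
qed

lemma two_disorder_laws_if_good_laws: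
  assumes "good_law \<mu>1" "good_law \<mu>2"
  obtains C where "two_disorder_laws \<mu>1 \<mu>2 C"
proof -
  obtain C1 C2 where "AE s in \<mu>1. \<bar>s\<bar> \<le> C1" "AE s in \<mu>2. \<bar>s\<bar> \<le> C2"
    using assms by (auto simp: good_law_def)
  then have "AE s in \<mu>1. \<bar>s\<bar> \<le> max 0 (max C1 C2)" "AE s in \<mu>2. \<bar>s\<bar> \<le> max 0 (max C1 C2)"
    by (auto elim!: AE_mp)
  with assms show ?thesis
    by (intro that[of "max 0 (max C1 C2)"])
       (auto simp: two_disorder_laws_def two_laws_def two_laws_axioms_def two_disorder_laws_axioms_def
          good_law_def good_law_mean_zero)
qed

theorem lemma3p1:
  fixes \<mu>1 \<mu>2 :: "real measure"
  assumes "good_law \<mu>1" and "good_law \<mu>2"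
  shows "\<exists>c>0. \<forall>h lam N m a. h \<ge> 0 \<longrightarrow> 0 \<le> lam \<longrightarrow> lam \<le> 1 \<longrightarrow>
            even N \<longrightarrow> 0 < N \<longrightarrow> even m \<longrightarrow> m \<le> N \<longrightarrow>
     \<bar>(\<integral>\<omega>. free_energy_m a N \<omega> lam h m \<partial>iid_law \<mu>1)
       - (\<integral>\<omega>. free_energy_m a N \<omega> lam h m \<partial>iid_law \<mu>2)\<bar>
        \<le> c * real m * lam ^ 3 / real N
   \<and> \<bar>(\<integral>\<omega>. free_energy a N \<omega> lam h \<partial>iid_law \<mu>1)
       - (\<integral>\<omega>. free_energy a N \<omega> lam h \<partial>iid_law \<mu>2)\<bar>
        \<le> c * lam ^ 3"
proof -
  obtain C where "two_disorder_laws \<mu>1 \<mu>2 C"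
    using assms by (rule two_disorder_laws_if_good_laws)
  then interpret two_disorder_laws \<mu>1 \<mu>2 C .
  define K where "K = 8 / 3 * C ^ 3 * exp (4 * C)"
  have "0 \<le> K"
    using C_nonneg by (simp add: K_def)
  show ?thesis
  proof (intro exI[of _ "K + 1"] conjI allI impI)
    show "0 < K + 1"
      using \<open>0 \<le> K\<close> by simp
  next
    fix h lam :: real and N m :: nat and a :: bc
    assume "0 \<le> h" and lam: "0 \<le> lam" "lam \<le> 1" and "even N" "0 < N" "even m" "m \<le> N"
    have "K * lam ^ 3 * real m \<le> (K + 1) * real m * lam ^ 3"
      using lam by (simp add: algebra_simps)
    then show "\<bar>(\<integral>\<omega>. free_energy_m a N \<omega> lam h m \<partial>iid_law \<mu>1)
        - (\<integral>\<omega>. free_energy_m a N \<omega> lam h m \<partial>iid_law \<mu>2)\<bar> \<le> (K + 1) * real m * lam ^ 3 / real N"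
      using free_energy_m_comparison[OF lam \<open>0 \<le> h\<close>, of a N m, folded K_def]
      by (meson divide_right_mono of_nat_0_le_iff order_trans)
    have "K * lam ^ 3 \<le> (K + 1) * lam ^ 3"
      using lam by (simp add: algebra_simps)
    then show "\<bar>(\<integral>\<omega>. free_energy a N \<omega> lam h \<partial>iid_law \<mu>1)
        - (\<integral>\<omega>. free_energy a N \<omega> lam h \<partial>iid_law \<mu>2)\<bar> \<le> (K + 1) * lam ^ 3"
      using free_energy_comparison[OF lam \<open>0 \<le> h\<close> \<open>0 < N\<close>, of a, folded K_def] by linarith
  qed
qed

end
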